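(* Let $r\ge1$ and $k\ge1$ be integers. For any two states $\vec a,\vec b\in\mathcal H_{r,k}$, the Hanoi game on $\mathcal H_{r,k}$ transforms $\vec a$ into $\vec b$ in at most $2^k-1$ moves. The same holds for the Hanoi game on $\mathcal H^*_{r,k}$: for any $\vec a,\vec b\in\mathcal H^*_{r,k}$, $\vec a$ can be transformed into $\vec b$ in at most $2^k-1$ moves with all intermediate states in $\mathcal H^*_{r,k}$.
   Context: A Hanoi state is a finite sequence of nonnegative integers $\vec x=(x_1,\dots,x_k)$ with $x_i\ne x_{i-1}$ for all $i>1$. $\mathcal H_{r,k}$ is the set of Hanoi states in $\{0,1,\dots,r\}^k$, and $\mathcal H^*_{r,k}\subseteq\mathcal H_{r,k}$ is the set of proper Hanoi states, those with $x_1\ne0$. In the Hanoi game on $\mathcal H_{r,k}$ a state is transformed by moves of two types: (1) an adjustment changes $x_k$ to any other value in $\{0,1,\dots,r\}$ different from $x_{k-1}$ (if $k=1$, to any other value); (2) for $k\ge2$, an involution finds the longest final segment $(x_j,\dots,x_k)$ of $\vec x$ on which the entries alternate between the values $x_k$ and $x_{k-1}$, and swaps the values $x_k$ and $x_{k-1}$ throughout that segment (e.g. $(1,2,3,4)\mapsto(1,2,4,3)$, $(1,2,1,2)\mapsto(2,1,2,1)$). The Hanoi game on $\mathcal H^*_{r,k}$ is the same but all states involved must be proper (moves that would make $x_1=0$ are forbidden). *)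

theory Defs
  imports Main
begin

definition hanoi_states :: "nat \<Rightarrow> nat \<Rightarrow> nat list set" where
  "hanoi_states r k = {xs. length xs = k \<and> (\<forall>x\<in>set xs. x \<le> r) \<and>
      (\<forall>i. 0 < i \<and> i < k \<longrightarrow> xs ! i \<noteq> xs ! (i - 1))}"

definition proper_hanoi_states :: "nat \<Rightarrow> nat \<Rightarrow> nat list set" where
  "proper_hanoi_states r k = {xs \<in> hanoi_states r k. hd xs \<noteq> 0}"

fun swap_alt :: "nat \<Rightarrow> nat \<Rightarrow> nat list \<Rightarrow> nat list" where
  "swap_alt u v [] = []"
| "swap_alt u v (y # ys) = (if y = u then v # swap_alt v u ys else y # ys)"

text \<open>The involution move: longest final segment alternating between x_k and x_{k-1},
  with these two values swapped on it.\<close>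
definition involution :: "nat list \<Rightarrow> nat list" where
  "involution xs = rev (swap_alt (last xs) (last (butlast xs)) (rev xs))"

definition adjustment :: "nat \<Rightarrow> nat list \<Rightarrow> nat list \<Rightarrow> bool" where
  "adjustment r xs ys \<longleftrightarrow> (\<exists>zs c c'. xs = zs @ [c] \<and> ys = zs @ [c'] \<and> c' \<le> r \<and> c' \<noteq> c \<and>
      (zs = [] \<or> c' \<noteq> last zs))"

definition hanoi_move :: "nat \<Rightarrow> nat \<Rightarrow> nat list \<Rightarrow> nat list \<Rightarrow> bool" where
  "hanoi_move r k xs ys \<longleftrightarrow> xs \<in> hanoi_states r k \<and> ys \<in> hanoi_states r k \<and>
     (adjustment r xs ys \<or> (2 \<le> length xs \<and> ys = involution xs))"

definition proper_hanoi_move :: "nat \<Rightarrow> nat \<Rightarrow> nat list \<Rightarrow> nat list \<Rightarrow> bool" where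
  "proper_hanoi_move r k xs ys \<longleftrightarrow> hanoi_move r k xs ys \<and>
     xs \<in> proper_hanoi_states r k \<and> ys \<in> proper_hanoi_states r k"

end

theory Submission
  imports Defs
begin

text \<open>Write \<open>a = xs @ [c]\<close> and \<open>b = ys @ [d]\<close>. A single move of the game on
  length-\<open>k\<close> states lifts to at most two moves on length-\<open>(k+1)\<close> states: first adjust the new last
  entry to a suitable value \<open>t\<close>, then apply the involution, which then acts on the old last two
  entries exactly as the old move did and leaves a valid new last entry behind. Lifting the at most
  \<open>2^k - 1\<close> moves from \<open>xs\<close> to \<open>ys\<close> and finishing with one adjustment to \<open>d\<close> takes at most
  \<open>2 (2^k - 1) + 1 = 2^(k+1) - 1\<close> moves. None of these moves alters the first entry, except
  those lifted from moves that already did, so the same argument works in the proper game.\<close>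

definition reachable_within :: "('a \<Rightarrow> 'a \<Rightarrow> bool) \<Rightarrow> nat \<Rightarrow> 'a \<Rightarrow> 'a \<Rightarrow> bool" where
  "reachable_within R n a b \<longleftrightarrow> (\<exists>m\<le>n. (R ^^ m) a b)"

lemma reachable_within_refl: "reachable_within R n a a"
  unfolding reachable_within_def by (intro exI[of _ 0]) simp

lemma reachable_within_step: "R a b \<Longrightarrow> reachable_within R 1 a b"
  unfolding reachable_within_def by (metis relpowp_1 order_refl)

lemma reachable_within_trans:
  assumes "reachable_within R m a b" and "reachable_within R n b c"
  shows "reachable_within R (m + n) a c"
proof -
  obtain i j where "i \<le> m" "(R ^^ i) a b" "j \<le> n" "(R ^^ j) b c"
    using assms unfolding reachable_within_def by blast
  then have "i + j \<le> m + n" and "(R ^^ (i + j)) a c"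
    by (auto simp: relpowp_add)
  then show ?thesis
    unfolding reachable_within_def by blast
qed

lemma reachable_within_mono: "m \<le> n \<Longrightarrow> reachable_within R m a b \<Longrightarrow> reachable_within R n a b"
  unfolding reachable_within_def using order_trans by blast

lemma successively_iff_nth:
  "successively P xs \<longleftrightarrow> (\<forall>i. 0 < i \<and> i < length xs \<longrightarrow> P (xs ! (i - 1)) (xs ! i))"
proof (induction P xs rule: successively.induct)
  case (3 P x y xs)
  have shift: "(\<forall>i. 0 < i \<and> i < Suc n \<longrightarrow> Q i) \<longleftrightarrow>
      (n = 0 \<or> Q 1) \<and> (\<forall>i. 0 < i \<and> i < n \<longrightarrow> Q (Suc i))" for n and Q :: "nat \<Rightarrow> bool"
    by (metis One_nat_def Suc_less_eq Suc_pred bot_nat_0.not_eq_extremum less_Suc0 zero_less_Suc)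
  show ?case
    using 3 by (simp only: successively.simps shift length_Cons) auto
qed simp_all

lemma hanoi_states_iff:
  "xs \<in> hanoi_states r k \<longleftrightarrow> length xs = k \<and> (\<forall>x\<in>set xs. x \<le> r) \<and> successively (\<noteq>) xs"
  by (auto simp: hanoi_states_def successively_iff_nth)

lemma hanoi_states_snoc:
  "xs @ [c] \<in> hanoi_states r (Suc k) \<longleftrightarrow>
    xs \<in> hanoi_states r k \<and> c \<le> r \<and> (xs = [] \<or> c \<noteq> last xs)"
  by (auto simp: hanoi_states_iff successively_append_iff)

text \<open>For \<open>k = 0\<close> the condition \<open>hd xs \<in> A\<close> concerns the junk value \<open>hd []\<close>; hence the
  lemmas below assume \<open>k \<ge> 1\<close> or a nonempty prefix.\<close>

definition head_restricted_states :: "nat set \<Rightarrow> nat \<Rightarrow> nat \<Rightarrow> nat list set" where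
  "head_restricted_states A r k = {xs \<in> hanoi_states r k. hd xs \<in> A}"

definition head_restricted_move :: "nat set \<Rightarrow> nat \<Rightarrow> nat \<Rightarrow> nat list \<Rightarrow> nat list \<Rightarrow> bool" where
  "head_restricted_move A r k xs ys \<longleftrightarrow> hanoi_move r k xs ys \<and> hd xs \<in> A \<and> hd ys \<in> A"

lemma head_restricted_move_UNIV: "head_restricted_move UNIV r k = hanoi_move r k"
  by (auto simp: head_restricted_move_def fun_eq_iff)

lemma head_restricted_move_nonzero: "head_restricted_move (- {0}) r k = proper_hanoi_move r k"
  by (auto simp: head_restricted_move_def proper_hanoi_move_def proper_hanoi_states_def
      hanoi_move_def fun_eq_iff)

lemma head_restricted_move_iff:
  "head_restricted_move A r k xs ys \<longleftrightarrow>
    xs \<in> head_restricted_states A r k \<and> ys \<in> head_restricted_states A r k \<and>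
    (adjustment r xs ys \<or> 2 \<le> length xs \<and> ys = involution xs)"
  by (auto simp: head_restricted_move_def head_restricted_states_def hanoi_move_def)

lemma head_restricted_states_length: "xs \<in> head_restricted_states A r k \<Longrightarrow> length xs = k"
  by (simp add: head_restricted_states_def hanoi_states_def)

lemma head_restricted_states_snoc:
  "xs \<noteq> [] \<Longrightarrow> xs @ [c] \<in> head_restricted_states A r (Suc k) \<longleftrightarrow>
    xs \<in> head_restricted_states A r k \<and> c \<le> r \<and> c \<noteq> last xs"
  by (auto simp: head_restricted_states_def hanoi_states_snoc)

lemma involution_swap_last_two:
  assumes "zs = [] \<or> e' \<noteq> last zs"
  shows "involution (zs @ [e, e']) = zs @ [e', e]"
proof -
  have "swap_alt e' e (rev zs) = rev zs"
    using assms by (cases "rev zs") (auto simp: last_rev[symmetric] hd_rev)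
  then show ?thesis
    by (simp add: involution_def butlast_append)
qed

lemma involution_snoc_alternating: "involution (zs @ [a, b, a]) = involution (zs @ [a, b]) @ [b]"
  by (simp add: involution_def butlast_append)

lemma last_involution: "last (involution (zs @ [a, b])) = a"
  by (simp add: involution_def butlast_append)

lemma adjustment_reachable:
  assumes "xs @ [c] \<in> head_restricted_states A r k" and "xs @ [d] \<in> head_restricted_states A r k"
  shows "reachable_within (head_restricted_move A r k) 1 (xs @ [c]) (xs @ [d])"
proof (cases "c = d")
  case True
  then show ?thesis by (simp add: reachable_within_refl)
next
  case False
  obtain k' where "k = Suc k'"
    using head_restricted_states_length[OF assms(1)] by (cases k) auto
  then have "d \<le> r" and "xs = [] \<or> d \<noteq> last xs"
    using assms(2) by (auto simp: head_restricted_states_def hanoi_states_snoc)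
  with False have "adjustment r (xs @ [c]) (xs @ [d])"
    unfolding adjustment_def by blast
  with assms show ?thesis
    by (intro reachable_within_step) (simp add: head_restricted_move_iff)
qed

lemma adjustment_involution_reachable:
  assumes "xs \<noteq> []"
    and "xs @ [c] \<in> head_restricted_states A r k" and "xs @ [t] \<in> head_restricted_states A r k"
    and "involution (xs @ [t]) \<in> head_restricted_states A r k"
  shows "reachable_within (head_restricted_move A r k) 2 (xs @ [c]) (involution (xs @ [t]))"
proof -
  have "2 \<le> length (xs @ [t])"
    using assms(1) by (cases xs) auto
  with assms(3,4) have "head_restricted_move A r k (xs @ [t]) (involution (xs @ [t]))"
    by (simp add: head_restricted_move_iff)
  from reachable_within_trans[OF adjustment_reachable[OF assms(2,3)]
      reachable_within_step[of "head_restricted_move A r k", OF this]]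
  show ?thesis by (simp only: one_add_one)
qed

text \<open>The lifted moves: an adjustment \<open>zs @ [e] \<mapsto> zs @ [e']\<close> becomes
  \<open>zs @ [e, c] \<mapsto> zs @ [e, e'] \<mapsto> zs @ [e', e]\<close>, and the involution of \<open>zs @ [a, b]\<close> becomes
  \<open>zs @ [a, b, c] \<mapsto> zs @ [a, b, a] \<mapsto> involution (zs @ [a, b]) @ [b]\<close>.\<close>

lemma head_restricted_move_lift:
  assumes "head_restricted_move A r k xs ys" and "xs @ [c] \<in> head_restricted_states A r (Suc k)"
    and "1 \<le> k"
  obtains c' where "ys @ [c'] \<in> head_restricted_states A r (Suc k)"
    and "reachable_within (head_restricted_move A r (Suc k)) 2 (xs @ [c]) (ys @ [c'])"
proof -
  let ?S = "head_restricted_states A r"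
  have xs: "xs \<in> ?S k" and ys: "ys \<in> ?S k"
    using assms(1) by (auto simp: head_restricted_move_iff)
  then have "xs \<noteq> []" and "ys \<noteq> []"
    using assms(3) head_restricted_states_length by fastforce+
  note snoc = head_restricted_states_snoc[OF \<open>xs \<noteq> []\<close>] head_restricted_states_snoc[OF \<open>ys \<noteq> []\<close>]
  have "\<exists>t t'. xs @ [t] \<in> ?S (Suc k) \<and> ys @ [t'] \<in> ?S (Suc k) \<and> involution (xs @ [t]) = ys @ [t']"
    using assms(1) unfolding head_restricted_move_iff
  proof (elim conjE disjE)
    assume "adjustment r xs ys"
    then obtain zs e e' where z: "xs = zs @ [e]" "ys = zs @ [e']" "e' \<le> r" "e' \<noteq> e"
      "zs = [] \<or> e' \<noteq> last zs"
      unfolding adjustment_def by blast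
    have "e \<le> r"
      using xs z(1) by (simp add: head_restricted_states_def hanoi_states_iff)
    moreover have "last xs = e" "last ys = e'" "involution (xs @ [e']) = ys @ [e]"
      using z involution_swap_last_two[OF z(5), of e] by simp_all
    ultimately have "xs @ [e'] \<in> ?S (Suc k)" "ys @ [e] \<in> ?S (Suc k)"
      "involution (xs @ [e']) = ys @ [e]"
      using xs ys z(3,4) by (simp_all add: snoc)
    then show ?thesis by blast
  next
    assume "2 \<le> length xs" and inv: "ys = involution xs"
    then obtain zs a b where z: "xs = zs @ [a, b]"
      by (cases xs rule: rev_cases; cases "butlast xs" rule: rev_cases) auto
    have "a \<le> r" "b \<le> r" "a \<noteq> b"
      using xs unfolding z head_restricted_states_def
      by (auto simp: hanoi_states_iff successively_append_iff)
    moreover have "last xs = b" "last ys = a" "involution (xs @ [a]) = ys @ [b]"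
      using inv z involution_snoc_alternating[of zs a b] last_involution[of zs a b] by simp_all
    ultimately have "xs @ [a] \<in> ?S (Suc k)" "ys @ [b] \<in> ?S (Suc k)"
      "involution (xs @ [a]) = ys @ [b]"
      using xs ys by (simp_all add: snoc)
    then show ?thesis by blast
  qed
  then obtain t t' where t: "xs @ [t] \<in> ?S (Suc k)" "ys @ [t'] \<in> ?S (Suc k)"
    and inv: "involution (xs @ [t]) = ys @ [t']"
    by blast
  show thesis
    using that[OF t(2)] adjustment_involution_reachable[OF \<open>xs \<noteq> []\<close> assms(2) t(1)] t(2) inv
    by simp
qed

lemma head_restricted_moves_lift:
  assumes "(head_restricted_move A r k ^^ n) xs ys" and "1 \<le> k"
    and "xs @ [c] \<in> head_restricted_states A r (Suc k)"
  shows "\<exists>c'. ys @ [c'] \<in> head_restricted_states A r (Suc k) \<and>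
    reachable_within (head_restricted_move A r (Suc k)) (2 * n) (xs @ [c]) (ys @ [c'])"
  using assms(1)
proof (induction n arbitrary: ys)
  case 0
  then show ?case
    using assms(3) by (auto intro!: exI[of _ c] reachable_within_refl)
next
  case (Suc n)
  let ?S = "head_restricted_states A r" and ?M = "head_restricted_move A r"
  obtain y where "(?M k ^^ n) xs y" and step: "?M k y ys"
    using Suc.prems by auto
  with Suc.IH obtain c'' where c'': "y @ [c''] \<in> ?S (Suc k)"
    and first: "reachable_within (?M (Suc k)) (2 * n) (xs @ [c]) (y @ [c''])"
    by blast
  obtain c' where c': "ys @ [c'] \<in> ?S (Suc k)"
    and second: "reachable_within (?M (Suc k)) 2 (y @ [c'']) (ys @ [c'])"
    using head_restricted_move_lift[OF step c'' assms(2)] .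
  have "reachable_within (?M (Suc k)) (2 * n + 2) (xs @ [c]) (ys @ [c'])"
    by (rule reachable_within_trans[OF first second])
  with c' show ?case
    by auto
qed

lemma head_restricted_reachable:
  assumes "1 \<le> k" and "a \<in> head_restricted_states A r k" and "b \<in> head_restricted_states A r k"
  shows "reachable_within (head_restricted_move A r k) (2 ^ k - 1) a b"
  using assms
proof (induction k arbitrary: a b)
  case 0
  then show ?case by simp
next
  case (Suc k)
  let ?S = "head_restricted_states A r" and ?M = "head_restricted_move A r"
  have "length a = Suc k" "length b = Suc k"
    using Suc.prems head_restricted_states_length by blast+
  then obtain xs c ys d where a: "a = xs @ [c]" and b: "b = ys @ [d]"
    and len: "length xs = k" "length ys = k"
    by (cases a rule: rev_cases; cases b rule: rev_cases) auto
  show ?case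
  proof (cases "k = 0")
    case True
    with len Suc.prems a b show ?thesis
      using adjustment_reachable[of "[]" c A r "Suc 0" d] by simp
  next
    case False
    then have "xs \<noteq> []" and "ys \<noteq> []"
      using len by auto
    have "xs \<in> ?S k"
      using Suc.prems(2) unfolding a head_restricted_states_snoc[OF \<open>xs \<noteq> []\<close>] by blast
    moreover have "ys \<in> ?S k"
      using Suc.prems(3) unfolding b head_restricted_states_snoc[OF \<open>ys \<noteq> []\<close>] by blast
    ultimately have "reachable_within (?M k) (2 ^ k - 1) xs ys"
      using Suc.IH False by simp
    then obtain n where n: "n \<le> 2 ^ k - 1" "(?M k ^^ n) xs ys"
      unfolding reachable_within_def by blast
    obtain c' where c': "ys @ [c'] \<in> ?S (Suc k)"
      and lifted: "reachable_within (?M (Suc k)) (2 * n) a (ys @ [c'])"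
      using head_restricted_moves_lift[OF n(2) _ Suc.prems(2)[unfolded a]] False a by auto
    have "reachable_within (?M (Suc k)) (2 * n + 1) a b"
      using reachable_within_trans[OF lifted adjustment_reachable[OF c' Suc.prems(3)[unfolded b]]] b
      by simp
    moreover have "2 * n + 1 \<le> 2 ^ Suc k - 1"
      using n(1) zero_less_power[of "2::nat" k] unfolding power_Suc by linarith
    ultimately show ?thesis
      by (rule reachable_within_mono[rotated])
  qed
qed

theorem lemma5:
  fixes r k :: nat
  assumes "1 \<le> r" and "1 \<le> k"
  shows "(\<forall>a\<in>hanoi_states r k. \<forall>b\<in>hanoi_states r k.
            \<exists>m \<le> 2 ^ k - 1. (hanoi_move r k ^^ m) a b) \<and>
         (\<forall>a\<in>proper_hanoi_states r k. \<forall>b\<in>proper_hanoi_states r k.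
            \<exists>m \<le> 2 ^ k - 1. (proper_hanoi_move r k ^^ m) a b)"
proof (intro conjI ballI)
  fix a b assume "a \<in> hanoi_states r k" "b \<in> hanoi_states r k"
  then have "reachable_within (head_restricted_move UNIV r k) (2 ^ k - 1) a b"
    using assms(2) by (intro head_restricted_reachable) (auto simp: head_restricted_states_def)
  then show "\<exists>m \<le> 2 ^ k - 1. (hanoi_move r k ^^ m) a b"
    by (simp add: reachable_within_def head_restricted_move_UNIV)
next
  fix a b assume "a \<in> proper_hanoi_states r k" "b \<in> proper_hanoi_states r k"
  then have "reachable_within (head_restricted_move (- {0}) r k) (2 ^ k - 1) a b"
    using assms(2) by (intro head_restricted_reachable)
      (auto simp: head_restricted_states_def proper_hanoi_states_def)
  then show "\<exists>m \<le> 2 ^ k - 1. (proper_hanoi_move r k ^^ m) a b"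
    by (simp add: reachable_within_def head_restricted_move_nonzero)
qed

end
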